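(* Let $1\le i<j\le n+1$ and let $\theta'$ and $\tilde{\theta}$ be as in the context. Then there exists $\tilde{v}\in GL(j+1-i,\mathbb{C})$ such that (1) $\tilde{\theta}=\mathrm{Ad}(\tilde{v}^{-1})\circ\theta_{j+1-i}\circ\mathrm{Ad}(\tilde{v})$, so that the fixed group $\tilde{K}=GL(j+1-i,\mathbb{C})^{\tilde{\theta}}$ is isomorphic to $K_{j+1-i}$; and (2) $\mathrm{Ad}(\tilde{v})\mathfrak{b}_{+,j+1-i}$ lies in the open $K_{j+1-i}$-orbit on the flag variety $\mathcal{B}_{j+1-i}$ of $\mathfrak{gl}(j+1-i,\mathbb{C})$.
   Context: $n\ge1$, $\mathfrak{g}=\mathfrak{gl}(n+1,\mathbb{C})$ with standard basis $e_1,\dots,e_{n+1}$ of $\mathbb{C}^{n+1}$. $\theta$ is conjugation by $c=\mathrm{diag}(1,\dots,1,-1)$. For a permutation $\pi$, its permutation matrix sends $e_k\mapsto e_{\pi(k)}$, and the cycle $(a_1\,a_2\dots a_r)$ sends $a_1\mapsto a_2\mapsto\dots\mapsto a_r\mapsto a_1$. Let $w$ be the permutation matrix of the cycle $(n+1\ n\ \dots\ i)$, $\sigma$ that of the cycle $(i+1\ i+2\ \dots\ j)$ (trivial if $j=i+1$), and $u$ the matrix with $u(e_i)=e_i+e_{i+1}$, $u(e_{i+1})=-e_i+e_{i+1}$, $u(e_k)=e_k$ for $k\ne i,i+1$. Put $v=wu\sigma$ and $\theta'=\mathrm{Ad}(v^{-1})\circ\theta\circ\mathrm{Ad}(v)$.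 The subalgebra of $\mathfrak{g}$ of matrices supported on rows and columns $i,\dots,j$, identified with $\mathfrak{gl}(j+1-i,\mathbb{C})$ via the ordered basis $e_i,\dots,e_j$, is $\theta'$-stable; $\tilde{\theta}$ is the restriction of $\theta'$ to it. For $m\ge1$, $\theta_m$ is conjugation by $\mathrm{diag}(1,\dots,1,-1)$ on $\mathfrak{gl}(m,\mathbb{C})$, $K_m=GL(m-1,\mathbb{C})\times GL(1,\mathbb{C})$ its fixed group (block diagonal invertible matrices), acting by conjugation on the flag variety $\mathcal{B}_m$ with a unique open orbit, and $\mathfrak{b}_{+,m}$ is the Borel subalgebra of upper triangular matrices in $\mathfrak{gl}(m,\mathbb{C})$. *)

theory Defs
  imports Complex_Main "Jordan_Normal_Form.Matrix"
begin

text \<open>Conventions: the paper's basis vector e_k (k = 1..N) is the JNF index k-1.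
  All matrices are complex N x N matrices in carrier_mat N N.\<close>

text \<open>Permutation matrix of pi (pi acting on paper indices 1..N): e_k maps to e_(pi k).\<close>
definition perm_mat :: "nat \<Rightarrow> (nat \<Rightarrow> nat) \<Rightarrow> complex mat" where
  "perm_mat N p = mat N N (\<lambda>(r, c). if Suc r = p (Suc c) then 1 else 0)"

definition w_perm :: "nat \<Rightarrow> nat \<Rightarrow> nat \<Rightarrow> nat" where
  "w_perm n i k = (if i < k \<and> k \<le> n + 1 then k - 1 else if k = i then n + 1 else k)"

definition sigma_perm :: "nat \<Rightarrow> nat \<Rightarrow> nat \<Rightarrow> nat" where
  "sigma_perm i j k = (if i + 1 \<le> k \<and> k < j then k + 1 else if k = j then i + 1 else k)"

text \<open>u(e_i) = e_i + e_(i+1), u(e_(i+1)) = -e_i + e_(i+1), u(e_k) = e_k otherwise.\<close>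
definition u_mat :: "nat \<Rightarrow> nat \<Rightarrow> complex mat" where
  "u_mat N i = mat N N (\<lambda>(r, c).
     if Suc c = i then (if Suc r = i \<or> Suc r = i + 1 then 1 else 0)
     else if Suc c = i + 1 then (if Suc r = i then -1 else if Suc r = i + 1 then 1 else 0)
     else (if r = c then 1 else 0))"

definition c_mat :: "nat \<Rightarrow> complex mat" where
  "c_mat N = mat N N (\<lambda>(r, c). if r = c then (if r = N - 1 then -1 else 1) else 0)"

definition minv :: "nat \<Rightarrow> complex mat \<Rightarrow> complex mat" where
  "minv N A = (SOME B. B \<in> carrier_mat N N \<and> A * B = 1\<^sub>m N \<and> B * A = 1\<^sub>m N)"

definition v_mat :: "nat \<Rightarrow> nat \<Rightarrow> nat \<Rightarrow> complex mat" where
  "v_mat n i j = perm_mat (n + 1) (w_perm n i) * u_mat (n + 1) i * perm_mat (n + 1) (sigma_perm i j)"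

text \<open>theta' = Ad(v^-1) o theta o Ad(v), with theta = Ad(c) on gl(n+1,C).\<close>
definition theta' :: "nat \<Rightarrow> nat \<Rightarrow> nat \<Rightarrow> complex mat \<Rightarrow> complex mat" where
  "theta' n i j X = (let v = v_mat n i j; vi = minv (n + 1) v; c = c_mat (n + 1)
                     in vi * (c * (v * X * vi) * c) * v)"

text \<open>Identification of gl(m,C) with matrices of gl(N,C) supported on rows and columns
  i..i+m-1 (paper indices), via the ordered basis e_i, ..., e_(i+m-1).\<close>
definition embed_block :: "nat \<Rightarrow> nat \<Rightarrow> nat \<Rightarrow> complex mat \<Rightarrow> complex mat" where
  "embed_block N i m Y = mat N N (\<lambda>(r, c).
     if i - 1 \<le> r \<and> r < i - 1 + m \<and> i - 1 \<le> c \<and> c < i - 1 + m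
     then Y $$ (r - (i - 1), c - (i - 1)) else 0)"

text \<open>K_m = GL(m-1) x GL(1), block diagonal invertible matrices.\<close>
definition K_grp :: "nat \<Rightarrow> complex mat set" where
  "K_grp m = {k \<in> carrier_mat m m. invertible_mat k \<and>
                 (\<forall>r < m - 1. k $$ (r, m - 1) = 0 \<and> k $$ (m - 1, r) = 0)}"

text \<open>B_m: invertible upper triangular matrices (the normalizer of b_+,m).\<close>
definition borel_grp :: "nat \<Rightarrow> complex mat set" where
  "borel_grp m = {b \<in> carrier_mat m m. invertible_mat b \<and>
                    (\<forall>r c. c < r \<longrightarrow> r < m \<longrightarrow> b $$ (r, c) = 0)}"

definition mat_open :: "nat \<Rightarrow> complex mat set \<Rightarrow> bool" where
  "mat_open m S \<longleftrightarrow> S \<subseteq> carrier_mat m m \<and>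
     (\<forall>A \<in> S. \<exists>e > 0. \<forall>B \<in> carrier_mat m m.
        (\<forall>r < m. \<forall>c < m. cmod (B $$ (r, c) - A $$ (r, c)) < e) \<longrightarrow> B \<in> S)"

text \<open>The Borel subalgebra Ad(g) b_+,m lies in the open K_m-orbit on B_m = GL(m)/B_m
  iff the K_m-orbit of gB_m is open in GL(m)/B_m (quotient topology), i.e. iff the
  saturated set K_m g B_m is open in GL(m,C).\<close>
definition in_open_K_orbit :: "nat \<Rightarrow> complex mat \<Rightarrow> bool" where
  "in_open_K_orbit m g \<longleftrightarrow>
     mat_open m {k * g * b | k b. k \<in> K_grp m \<and> b \<in> borel_grp m}"

end

theory Submission
  imports Defs "Jordan_Normal_Form.Determinant"
begin

text \<open>Let t be the permutation matrix of the transposition (i j). The factors of v = w u \<sigma>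
  satisfy c w = w r, r u = u (i i+1) and (i i+1) \<sigma> = \<sigma> (i j), with r the reflection in e_i;
  hence c v = v t and \<theta>' = Ad(t). On matrices supported on rows and columns i..j, Ad(t) is
  conjugation by the transposition (1 m) of gl(m), m = j + 1 - i. This in turn equals
  Ad(v_tilde^-1) \<circ> \<theta>_m \<circ> Ad(v_tilde), where v_tilde acts as [[1,1],[1,-1]] on e_1, e_m and
  as the identity elsewhere, because c v_tilde = v_tilde (1 m) as well.

  For the open orbit, split m x m matrices into blocks along C^m = C^(m-1) + C. A product
  k v_tilde b with k \<in> K_m and b upper triangular is invertible, has invertible leading
  (m-1)-block and nonzero lower left entry. Conversely every such g factors as k v_tilde b, with
  b built from the upper triangular matrix whose first row is the bottom row of g. So
  K_m v_tilde B_m is cut out by finitely many non-vanishing conditions on polynomials in the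
  entries, hence open.\<close>

lemma index_mult_mat_sum:
  assumes "A \<in> carrier_mat n k" "B \<in> carrier_mat k m" "r < n" "c < m"
  shows "(A * B) $$ (r, c) = (\<Sum>l<k. A $$ (r, l) * B $$ (l, c))"
  using assms by (auto simp: scalar_prod_def lessThan_atLeast0 intro!: sum.cong)

lemma sum_lessThan_single:
  fixes k :: nat
  assumes "a < k" "\<And>l. l < k \<Longrightarrow> l \<noteq> a \<Longrightarrow> f l = 0"
  shows "(\<Sum>l<k. f l) = (f a :: 'a::comm_monoid_add)"
proof -
  have "(\<Sum>l<k. f l) = (\<Sum>l\<in>{a}. f l)"
    by (rule sum.mono_neutral_right) (use assms in auto)
  then show ?thesis by simp
qed

lemma sum_lessThan_pair:
  fixes k :: nat
  assumes "a < k" "b < k" "a \<noteq> b" "\<And>l. l < k \<Longrightarrow> l \<noteq> a \<Longrightarrow> l \<noteq> b \<Longrightarrow> f l = 0"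
  shows "(\<Sum>l<k. f l) = (f a + f b :: 'a::comm_monoid_add)"
proof -
  have "(\<Sum>l<k. f l) = (\<Sum>l\<in>{a, b}. f l)"
    by (rule sum.mono_neutral_right) (use assms in auto)
  then show ?thesis using assms by simp
qed

lemma det_ne_zero_if_right_inverse:
  assumes "A \<in> carrier_mat n n" "B \<in> carrier_mat n n" "A * B = 1\<^sub>m n"
  shows "det A \<noteq> (0 :: 'a :: field)"
  using det_mult[OF assms(1,2)] assms(3) by auto

lemma inverse_if_det_ne_zero:
  assumes "A \<in> carrier_mat n n" "det A \<noteq> (0 :: 'a :: field)"
  obtains B where "B \<in> carrier_mat n n" "A * B = 1\<^sub>m n" "B * A = 1\<^sub>m n"
  using det_non_zero_imp_unit[OF assms, of undefined]
  unfolding Units_def by (auto simp: ring_mat_simps)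

lemma invertible_mat_iff_det_ne_zero:
  assumes "A \<in> carrier_mat n n"
  shows "invertible_mat A \<longleftrightarrow> det A \<noteq> (0 :: 'a :: field)"
proof
  assume "invertible_mat A"
  then obtain B where B: "A * B = 1\<^sub>m n" "B * A = 1\<^sub>m (dim_row B)"
    using assms unfolding invertible_mat_def inverts_mat_def by auto
  have "B \<in> carrier_mat n n"
    using arg_cong[OF B(1), of dim_col] arg_cong[OF B(2), of dim_col] assms by auto
  then show "det A \<noteq> 0" using det_ne_zero_if_right_inverse[OF assms _ B(1)] by blast
next
  assume "det A \<noteq> 0"
  then obtain B where "B \<in> carrier_mat n n" "A * B = 1\<^sub>m n" "B * A = 1\<^sub>m n"
    using inverse_if_det_ne_zero[OF assms] by blast
  then show "invertible_mat A"
    using assms unfolding invertible_mat_def inverts_mat_def by auto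
qed

lemma minv_inverse:
  assumes "A \<in> carrier_mat n n" "det A \<noteq> 0"
  shows "minv n A \<in> carrier_mat n n" "A * minv n A = 1\<^sub>m n" "minv n A * A = 1\<^sub>m n"
proof -
  have "\<exists>B. B \<in> carrier_mat n n \<and> A * B = 1\<^sub>m n \<and> B * A = 1\<^sub>m n"
    using inverse_if_det_ne_zero[OF assms] by blast
  from someI_ex[OF this] show "minv n A \<in> carrier_mat n n" "A * minv n A = 1\<^sub>m n" "minv n A * A = 1\<^sub>m n"
    unfolding minv_def by auto
qed

lemma intertwine_mult:
  fixes A B C D E :: "'a :: semiring_1 mat"
  assumes carrier: "A \<in> carrier_mat n n" "B \<in> carrier_mat n n" "C \<in> carrier_mat n n"
      "D \<in> carrier_mat n n" "E \<in> carrier_mat n n"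
    and "C * A = A * D" "D * B = B * E"
  shows "C * (A * B) = A * B * E"
proof -
  have "C * (A * B) = C * A * B"
    using carrier by (simp add: assoc_mult_mat[of _ n n _ n _ n])
  also have "\<dots> = A * (D * B)"
    using carrier by (simp add: assms(6) assoc_mult_mat[of _ n n _ n _ n])
  also have "\<dots> = A * B * E"
    using carrier by (simp add: assms(7) assoc_mult_mat[of _ n n _ n _ n])
  finally show ?thesis .
qed

lemma conj_intertwined:
  fixes A Ai C T X :: "'a :: semiring_1 mat"
  assumes carrier: "A \<in> carrier_mat n n" "Ai \<in> carrier_mat n n" "C \<in> carrier_mat n n"
      "T \<in> carrier_mat n n" "X \<in> carrier_mat n n"
    and inv: "A * Ai = 1\<^sub>m n" "Ai * A = 1\<^sub>m n"
    and intertwine: "C * A = A * T"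
  shows "Ai * (C * (A * X * Ai) * C) * A = T * X * T"
proof -
  have "Ai * C = T * Ai"
  proof -
    have "Ai * C = Ai * C * (A * Ai)" using carrier inv by simp
    also have "\<dots> = Ai * (C * A) * Ai" using carrier by (simp add: assoc_mult_mat[of _ n n _ n _ n])
    also have "\<dots> = (Ai * A) * T * Ai" using carrier by (simp add: intertwine assoc_mult_mat[of _ n n _ n _ n])
    finally show ?thesis using carrier inv by simp
  qed
  have "Ai * (C * (A * X * Ai) * C) * A = (Ai * C) * (A * X * Ai) * (C * A)"
    using carrier by (simp add: assoc_mult_mat[of _ n n _ n _ n])
  also have "\<dots> = T * (Ai * A) * X * (Ai * A) * T"
    using carrier by (simp add: \<open>Ai * C = T * Ai\<close> intertwine assoc_mult_mat[of _ n n _ n _ n])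
  also have "\<dots> = T * X * T" using carrier inv by simp
  finally show ?thesis .
qed

section \<open>Permutation, reflection and plane matrices\<close>

lemma perm_mat_carrier [simp]: "perm_mat N p \<in> carrier_mat N N"
  by (simp add: perm_mat_def)

lemma mult_perm_mat:
  assumes p: "p ` {1..N} \<subseteq> {1..N}" and A: "A \<in> carrier_mat n N"
  shows "A * perm_mat N p = mat n N (\<lambda>(r, c). A $$ (r, p (Suc c) - 1))"
proof (rule eq_matI)
  fix r c assume "r < dim_row (mat n N (\<lambda>(r, c). A $$ (r, p (Suc c) - 1)))"
    "c < dim_col (mat n N (\<lambda>(r, c). A $$ (r, p (Suc c) - 1)))"
  then have r: "r < n" and c: "c < N" by auto
  have "p (Suc c) \<in> {1..N}" using p c by (auto simp: image_subset_iff)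
  then have pc: "p (Suc c) - 1 < N" "Suc (p (Suc c) - 1) = p (Suc c)" by auto
  have "(A * perm_mat N p) $$ (r, c) = (\<Sum>l<N. A $$ (r, l) * perm_mat N p $$ (l, c))"
    by (rule index_mult_mat_sum[OF A perm_mat_carrier r c])
  also have "\<dots> = A $$ (r, p (Suc c) - 1) * perm_mat N p $$ (p (Suc c) - 1, c)"
    by (rule sum_lessThan_single) (use pc c in \<open>auto simp: perm_mat_def\<close>)
  finally show "(A * perm_mat N p) $$ (r, c) = mat n N (\<lambda>(r, c). A $$ (r, p (Suc c) - 1)) $$ (r, c)"
    using pc r c by (simp add: perm_mat_def)
qed (use A in \<open>auto simp: perm_mat_def\<close>)

lemma involution_perm_mat_mult:
  assumes p: "p ` {1..N} \<subseteq> {1..N}" "\<And>k. k \<in> {1..N} \<Longrightarrow> p (p k) = k"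
    and A: "A \<in> carrier_mat N n"
  shows "perm_mat N p * A = mat N n (\<lambda>(r, c). A $$ (p (Suc r) - 1, c))"
proof (rule eq_matI)
  fix r c assume "r < dim_row (mat N n (\<lambda>(r, c). A $$ (p (Suc r) - 1, c)))"
    "c < dim_col (mat N n (\<lambda>(r, c). A $$ (p (Suc r) - 1, c)))"
  then have r: "r < N" and c: "c < n" by auto
  have "p (Suc r) \<in> {1..N}" "p (p (Suc r)) = Suc r" using p r by (auto simp: image_subset_iff)
  then have pr: "p (Suc r) - 1 < N" "Suc (p (Suc r) - 1) = p (Suc r)" "p (p (Suc r)) = Suc r"
    by auto
  have "(perm_mat N p * A) $$ (r, c) = (\<Sum>l<N. perm_mat N p $$ (r, l) * A $$ (l, c))"
    by (rule index_mult_mat_sum[OF perm_mat_carrier A r c])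
  also have "\<dots> = perm_mat N p $$ (r, p (Suc r) - 1) * A $$ (p (Suc r) - 1, c)"
  proof (rule sum_lessThan_single)
    fix l assume l: "l < N" "l \<noteq> p (Suc r) - 1"
    have "Suc r \<noteq> p (Suc l)"
      using p(2)[of "Suc l"] l pr by auto
    then show "perm_mat N p $$ (r, l) * A $$ (l, c) = 0" using l r by (simp add: perm_mat_def)
  qed (use pr in auto)
  finally show "(perm_mat N p * A) $$ (r, c) = mat N n (\<lambda>(r, c). A $$ (p (Suc r) - 1, c)) $$ (r, c)"
    using pr r c by (simp add: perm_mat_def)
qed (use A in \<open>auto simp: perm_mat_def\<close>)

lemma perm_mat_comp:
  assumes q: "q ` {1..N} \<subseteq> {1..N}"
  shows "perm_mat N p * perm_mat N q = perm_mat N (p \<circ> q)"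
  unfolding mult_perm_mat[OF q perm_mat_carrier]
proof (rule eq_matI)
  fix r c assume "r < dim_row (perm_mat N (p \<circ> q))" "c < dim_col (perm_mat N (p \<circ> q))"
  then have r: "r < N" and c: "c < N" by (auto simp: perm_mat_def)
  have "q (Suc c) \<in> {1..N}" using q c by (auto simp: image_subset_iff)
  then have "q (Suc c) - 1 < N" "Suc (q (Suc c) - 1) = q (Suc c)" by auto
  then show "mat N N (\<lambda>(r, c). perm_mat N p $$ (r, q (Suc c) - 1)) $$ (r, c) = perm_mat N (p \<circ> q) $$ (r, c)"
    using r c by (simp add: perm_mat_def)
qed (auto simp: perm_mat_def)

lemma perm_mat_id:
  assumes "\<And>k. k \<in> {1..N} \<Longrightarrow> p k = k"
  shows "perm_mat N p = 1\<^sub>m N"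
  by (rule eq_matI) (use assms in \<open>auto simp: perm_mat_def\<close>)

lemma det_perm_mat_ne_zero:
  assumes "q ` {1..N} \<subseteq> {1..N}" "\<And>k. k \<in> {1..N} \<Longrightarrow> p (q k) = k"
  shows "det (perm_mat N p) \<noteq> 0"
proof (rule det_ne_zero_if_right_inverse)
  show "perm_mat N p * perm_mat N q = 1\<^sub>m N"
    unfolding perm_mat_comp[OF assms(1)] by (rule perm_mat_id) (simp add: assms(2))
qed auto

lemma transpose_Suc:
  "1 \<le> a \<Longrightarrow> 1 \<le> b \<Longrightarrow> Transposition.transpose a b (Suc r) = Suc (Transposition.transpose (a - 1) (b - 1) r)"
  by (auto simp: transpose_def)

lemma conj_perm_mat_transpose:
  assumes "a \<in> {1..N}" "b \<in> {1..N}" and A: "A \<in> carrier_mat N N"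
  shows "perm_mat N (Transposition.transpose a b) * A * perm_mat N (Transposition.transpose a b) =
    mat N N (\<lambda>(r, c). A $$ (Transposition.transpose (a - 1) (b - 1) r, Transposition.transpose (a - 1) (b - 1) c))"
proof -
  let ?P = "perm_mat N (Transposition.transpose a b)" and ?t = "Transposition.transpose (a - 1) (b - 1)"
  have t: "Transposition.transpose a b ` {1..N} \<subseteq> {1..N}"
    using assms by (auto simp: transpose_def)
  have "?P * A * ?P = ?P * (A * ?P)" using A by (simp add: assoc_mult_mat[of _ N N _ N _ N])
  also have "\<dots> = ?P * mat N N (\<lambda>(r, c). A $$ (r, Transposition.transpose a b (Suc c) - 1))"
    by (simp add: mult_perm_mat[OF t A])
  also have "\<dots> = mat N N (\<lambda>(r, c). A $$ (?t r, ?t c))"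
    (is "_ = ?M")
  proof -
    have t_lt: "?t k < N" if "k < N" for k
      using assms that by (auto simp: transpose_def)
    have "?P * mat N N (\<lambda>(r, c). A $$ (r, Transposition.transpose a b (Suc c) - 1)) =
      mat N N (\<lambda>(r, c). mat N N (\<lambda>(r, c). A $$ (r, Transposition.transpose a b (Suc c) - 1))
        $$ (Transposition.transpose a b (Suc r) - 1, c))"
      by (rule involution_perm_mat_mult[OF t]) auto
    also have "\<dots> = ?M"
      by (rule eq_matI) (use assms t_lt in \<open>simp_all add: transpose_Suc\<close>)
    finally show ?thesis .
  qed
  finally show ?thesis .
qed

definition reflection_mat :: "nat \<Rightarrow> nat \<Rightarrow> 'a :: ring_1 mat" where
  "reflection_mat N a = mat N N (\<lambda>(r, c). if r = c then (if r = a then -1 else 1) else 0)"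

lemma c_mat_eq_reflection_mat: "c_mat N = reflection_mat N (N - 1)"
  by (rule eq_matI) (auto simp: c_mat_def reflection_mat_def)

lemma reflection_mat_mult:
  assumes A: "A \<in> carrier_mat N n"
  shows "reflection_mat N a * A = mat N n (\<lambda>(r, c). if r = a then - A $$ (r, c) else A $$ (r, c))"
proof (rule eq_matI)
  fix r c assume "r < dim_row (mat N n (\<lambda>(r, c). if r = a then - A $$ (r, c) else A $$ (r, c)))"
    "c < dim_col (mat N n (\<lambda>(r, c). if r = a then - A $$ (r, c) else A $$ (r, c)))"
  then have r: "r < N" and c: "c < n" by auto
  have "(reflection_mat N a * A) $$ (r, c) = reflection_mat N a $$ (r, r) * A $$ (r, c)"
    by (subst index_mult_mat_sum[OF _ A r c], simp add: reflection_mat_def, rule sum_lessThan_single)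
       (use r in \<open>auto simp: reflection_mat_def\<close>)
  then show "(reflection_mat N a * A) $$ (r, c) = mat N n (\<lambda>(r, c). if r = a then - A $$ (r, c) else A $$ (r, c)) $$ (r, c)"
    using r c by (simp add: reflection_mat_def)
qed (use A in \<open>auto simp: reflection_mat_def\<close>)

lemma mult_reflection_mat:
  assumes A: "A \<in> carrier_mat n N"
  shows "A * reflection_mat N a = mat n N (\<lambda>(r, c). if c = a then - A $$ (r, c) else A $$ (r, c))"
proof (rule eq_matI)
  fix r c assume "r < dim_row (mat n N (\<lambda>(r, c). if c = a then - A $$ (r, c) else A $$ (r, c)))"
    "c < dim_col (mat n N (\<lambda>(r, c). if c = a then - A $$ (r, c) else A $$ (r, c)))"
  then have r: "r < n" and c: "c < N" by auto
  have "(A * reflection_mat N a) $$ (r, c) = A $$ (r, c) * reflection_mat N a $$ (c, c)"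
    by (subst index_mult_mat_sum[OF A _ r c], simp add: reflection_mat_def, rule sum_lessThan_single)
       (use c in \<open>auto simp: reflection_mat_def\<close>)
  then show "(A * reflection_mat N a) $$ (r, c) = mat n N (\<lambda>(r, c). if c = a then - A $$ (r, c) else A $$ (r, c)) $$ (r, c)"
    using r c by (simp add: reflection_mat_def)
qed (use A in \<open>auto simp: reflection_mat_def\<close>)

definition plane_mat :: "nat \<Rightarrow> nat \<Rightarrow> nat \<Rightarrow> 'a \<Rightarrow> 'a \<Rightarrow> 'a \<Rightarrow> 'a \<Rightarrow> 'a :: comm_ring_1 mat" where
  "plane_mat N a b x y z w = mat N N (\<lambda>(r, c).
     if r \<in> {a, b} \<and> c \<in> {a, b}
     then (if r = a then (if c = a then x else y) else (if c = a then z else w))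
     else if r = c then 1 else 0)"

lemma plane_mat_carrier [simp]: "plane_mat N a b x y z w \<in> carrier_mat N N"
  by (simp add: plane_mat_def)

lemma plane_mat_index:
  assumes "a < N" "b < N" "a \<noteq> b"
  shows "plane_mat N a b x y z w $$ (a, a) = x" "plane_mat N a b x y z w $$ (a, b) = y"
    "plane_mat N a b x y z w $$ (b, a) = z" "plane_mat N a b x y z w $$ (b, b) = w"
  using assms by (simp_all add: plane_mat_def)

lemma plane_mat_index_outside:
  assumes "r < N" "c < N" "\<not> (r \<in> {a, b} \<and> c \<in> {a, b})"
  shows "plane_mat N a b x y z w $$ (r, c) = (if r = c then 1 else 0)"
proof -
  have "(r \<in> {a, b} \<and> c \<in> {a, b}) = False" using assms(3) by blast
  then show ?thesis
    unfolding plane_mat_def by (simp only: index_mat(1) assms(1,2) split if_False)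
qed

lemma plane_mat_mult:
  assumes ab: "a < N" "b < N" "a \<noteq> b"
  shows "plane_mat N a b x y z w * plane_mat N a b x' y' z' w' =
    plane_mat N a b (x * x' + y * z') (x * y' + y * w') (z * x' + w * z') (z * y' + w * w')"
    (is "?A * ?B = ?C")
proof (rule eq_matI)
  fix r c assume "r < dim_row ?C" "c < dim_col ?C"
  then have r: "r < N" and c: "c < N" by (auto simp: plane_mat_def)
  have "(?A * ?B) $$ (r, c) = (\<Sum>l<N. ?A $$ (r, l) * ?B $$ (l, c))"
    by (rule index_mult_mat_sum[OF plane_mat_carrier plane_mat_carrier r c])
  also have "\<dots> = ?C $$ (r, c)"
  proof (cases "c \<in> {a, b}")
    case True
    then have "(\<Sum>l<N. ?A $$ (r, l) * ?B $$ (l, c)) = ?A $$ (r, a) * ?B $$ (a, c) + ?A $$ (r, b) * ?B $$ (b, c)"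
      by (intro sum_lessThan_pair) (use ab c in \<open>auto simp: plane_mat_index_outside\<close>)
    also have "\<dots> = ?C $$ (r, c)"
    proof (cases "r \<in> {a, b}")
      case True
      with \<open>c \<in> {a, b}\<close> consider "r = a" "c = a" | "r = a" "c = b" | "r = b" "c = a" | "r = b" "c = b"
        by blast
      then show ?thesis by cases (simp_all add: plane_mat_index ab)
    next
      case False
      then show ?thesis using \<open>c \<in> {a, b}\<close> ab r c by (auto simp: plane_mat_index_outside)
    qed
    finally show ?thesis .
  next
    case False
    then have "(\<Sum>l<N. ?A $$ (r, l) * ?B $$ (l, c)) = ?A $$ (r, c) * ?B $$ (c, c)"
      by (intro sum_lessThan_single) (use c in \<open>auto simp: plane_mat_index_outside\<close>)
    then show ?thesis using False r c by (simp add: plane_mat_index_outside)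
  qed
  finally show "(?A * ?B) $$ (r, c) = ?C $$ (r, c)" .
qed (auto simp: plane_mat_def)

lemma plane_mat_id: "plane_mat N a b 1 0 0 1 = 1\<^sub>m N"
  by (rule eq_matI) (auto simp: plane_mat_def)

section \<open>The involution \<theta>' as conjugation by a transposition\<close>

lemma u_mat_carrier [simp]: "u_mat N i \<in> carrier_mat N N"
  by (simp add: u_mat_def)

lemma u_mat_eq_plane_mat:
  assumes "1 \<le> i" "i < N"
  shows "u_mat N i = plane_mat N (i - 1) i 1 (-1) 1 1"
  by (rule eq_matI) (use assms in \<open>auto simp: u_mat_def plane_mat_def\<close>)

lemma det_u_mat_ne_zero:
  assumes "1 \<le> i" "i < N"
  shows "det (u_mat N i) \<noteq> 0"
proof (rule det_ne_zero_if_right_inverse)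
  show "u_mat N i * plane_mat N (i - 1) i (1/2) (1/2) (-1/2) (1/2) = 1\<^sub>m N"
    using assms by (simp add: u_mat_eq_plane_mat plane_mat_mult plane_mat_id)
qed auto

lemma c_mat_carrier [simp]: "c_mat N \<in> carrier_mat N N"
  by (simp add: c_mat_def)

lemma v_mat_carrier: "v_mat n i j \<in> carrier_mat (n + 1) (n + 1)"
  unfolding v_mat_def by (rule mult_carrier_mat[OF mult_carrier_mat[OF perm_mat_carrier u_mat_carrier] perm_mat_carrier])

context
  fixes n i j :: nat
  assumes ij: "1 \<le> i" "i < j" "j \<le> n + 1"
begin

lemma c_mat_mult_w_perm:
  "c_mat (n + 1) * perm_mat (n + 1) (w_perm n i) = perm_mat (n + 1) (w_perm n i) * reflection_mat (n + 1) (i - 1)"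
  unfolding c_mat_eq_reflection_mat reflection_mat_mult[OF perm_mat_carrier] mult_reflection_mat[OF perm_mat_carrier]
  by (rule eq_matI) (use ij in \<open>auto simp: perm_mat_def w_perm_def\<close>)

lemma reflection_mat_mult_u_mat:
  "reflection_mat (n + 1) (i - 1) * u_mat (n + 1) i = u_mat (n + 1) i * perm_mat (n + 1) (Transposition.transpose i (i + 1))"
proof -
  have t: "Transposition.transpose i (i + 1) ` {1..n + 1} \<subseteq> {1..n + 1}"
    using ij by (auto simp: transpose_def)
  show ?thesis
    unfolding reflection_mat_mult[of _ "n + 1", OF u_mat_carrier] mult_perm_mat[OF t u_mat_carrier]
    by (rule eq_matI) (use ij in \<open>auto simp: u_mat_def transpose_def\<close>)
qed

lemma transpose_mult_sigma_perm:
  "perm_mat (n + 1) (Transposition.transpose i (i + 1)) * perm_mat (n + 1) (sigma_perm i j) =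
   perm_mat (n + 1) (sigma_perm i j) * perm_mat (n + 1) (Transposition.transpose i j)"
proof -
  have "sigma_perm i j ` {1..n + 1} \<subseteq> {1..n + 1}" "Transposition.transpose i j ` {1..n + 1} \<subseteq> {1..n + 1}"
    using ij by (auto simp: sigma_perm_def transpose_def)
  moreover have "Transposition.transpose i (i + 1) \<circ> sigma_perm i j = sigma_perm i j \<circ> Transposition.transpose i j"
    using ij by (auto simp: sigma_perm_def transpose_def)
  ultimately show ?thesis by (simp add: perm_mat_comp)
qed

lemma det_v_mat_ne_zero: "det (v_mat n i j) \<noteq> 0"
proof -
  have "det (perm_mat (n + 1) (w_perm n i)) \<noteq> 0"
    by (rule det_perm_mat_ne_zero[where q = "\<lambda>k. if i \<le> k \<and> k \<le> n then k + 1 else if k = n + 1 then i else k"])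
       (use ij in \<open>auto simp: w_perm_def\<close>)
  moreover have "det (perm_mat (n + 1) (sigma_perm i j)) \<noteq> 0"
    by (rule det_perm_mat_ne_zero[where q = "\<lambda>k. if i + 2 \<le> k \<and> k \<le> j then k - 1 else if k = i + 1 then j else k"])
       (use ij in \<open>auto simp: sigma_perm_def\<close>)
  moreover have "det (u_mat (n + 1) i) \<noteq> 0"
    using ij by (intro det_u_mat_ne_zero) auto
  ultimately show ?thesis
    unfolding v_mat_def det_mult[OF mult_carrier_mat[OF perm_mat_carrier u_mat_carrier] perm_mat_carrier]
      det_mult[OF perm_mat_carrier u_mat_carrier] by simp
qed

lemma c_mat_mult_v_mat:
  "c_mat (n + 1) * v_mat n i j = v_mat n i j * perm_mat (n + 1) (Transposition.transpose i j)"
proof -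
  have WU: "c_mat (n + 1) * (perm_mat (n + 1) (w_perm n i) * u_mat (n + 1) i) =
    perm_mat (n + 1) (w_perm n i) * u_mat (n + 1) i * perm_mat (n + 1) (Transposition.transpose i (i + 1))"
    by (rule intertwine_mult[where n = "n + 1", OF _ _ _ _ _ c_mat_mult_w_perm reflection_mat_mult_u_mat])
       (simp_all add: reflection_mat_def)
  show ?thesis
    unfolding v_mat_def
    by (rule intertwine_mult[where n = "n + 1", OF _ _ _ _ _ WU transpose_mult_sigma_perm])
       (simp_all add: mult_carrier_mat[OF perm_mat_carrier u_mat_carrier])
qed

lemma theta'_eq_conj_transpose:
  assumes "X \<in> carrier_mat (n + 1) (n + 1)"
  shows "theta' n i j X = perm_mat (n + 1) (Transposition.transpose i j) * X * perm_mat (n + 1) (Transposition.transpose i j)"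
  using minv_inverse[OF v_mat_carrier det_v_mat_ne_zero] unfolding theta'_def Let_def
  by (intro conj_intertwined[OF v_mat_carrier _ c_mat_carrier perm_mat_carrier assms _ _ c_mat_mult_v_mat])

end

lemma transpose_block_index:
  fixes a m r :: nat
  assumes "1 \<le> m"
  shows "a \<le> Transposition.transpose a (a + m - 1) r \<and> Transposition.transpose a (a + m - 1) r < a + m
      \<longleftrightarrow> a \<le> r \<and> r < a + m"
    and "a \<le> r \<Longrightarrow> r < a + m \<Longrightarrow>
      Transposition.transpose a (a + m - 1) r - a = Transposition.transpose 0 (m - 1) (r - a)"
  using assms by (auto simp: transpose_def)

lemma embed_block_carrier [simp]: "embed_block N i m Y \<in> carrier_mat N N"
  by (simp add: embed_block_def)

lemma index_embed_block:
  assumes "r < N" "c < N"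
  shows "embed_block N i m Y $$ (r, c) = (if i - 1 \<le> r \<and> r < i - 1 + m \<and> i - 1 \<le> c \<and> c < i - 1 + m
    then Y $$ (r - (i - 1), c - (i - 1)) else 0)"
  using assms by (simp add: embed_block_def)

lemma conj_transpose_embed_block:
  assumes "1 \<le> i" and m: "1 \<le> m" and "i + m \<le> N + 1" and Y: "Y \<in> carrier_mat m m"
  shows "perm_mat N (Transposition.transpose i (i + m - 1)) * embed_block N i m Y * perm_mat N (Transposition.transpose i (i + m - 1)) =
    embed_block N i m (perm_mat m (Transposition.transpose 1 m) * Y * perm_mat m (Transposition.transpose 1 m))"
proof -
  obtain a where i: "i = Suc a" using assms(1) by (cases i) auto
  let ?t = "Transposition.transpose a (a + m - 1)" and ?s = "Transposition.transpose 0 (m - 1)"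
  have t_lt: "?t r < N" if "r < N" for r
    using assms that i by (auto simp: transpose_def)
  have s_lt: "?s r < m" if "r < m" for r
    using m that by (auto simp: transpose_def)
  have lhs: "perm_mat N (Transposition.transpose i (i + m - 1)) * embed_block N i m Y * perm_mat N (Transposition.transpose i (i + m - 1))
      = mat N N (\<lambda>(r, c). embed_block N i m Y $$ (?t r, ?t c))"
    using conj_perm_mat_transpose[of i N "i + m - 1", OF _ _ embed_block_carrier] assms i by simp
  have rhs: "perm_mat m (Transposition.transpose 1 m) * Y * perm_mat m (Transposition.transpose 1 m)
      = mat m m (\<lambda>(r, c). Y $$ (?s r, ?s c))"
    using conj_perm_mat_transpose[of 1 m m, OF _ _ Y] m by simp
  show ?thesis
    unfolding lhs rhs
  proof (rule eq_matI)
    fix r c assume "r < dim_row (embed_block N i m (mat m m (\<lambda>(r, c). Y $$ (?s r, ?s c))))"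
      "c < dim_col (embed_block N i m (mat m m (\<lambda>(r, c). Y $$ (?s r, ?s c))))"
    then have r: "r < N" and c: "c < N" by (auto simp: embed_block_def)
    have in_block_iff: "(a \<le> ?t r \<and> ?t r < a + m \<and> a \<le> ?t c \<and> ?t c < a + m) \<longleftrightarrow>
        (a \<le> r \<and> r < a + m \<and> a \<le> c \<and> c < a + m)"
      using transpose_block_index(1)[OF m, of a r] transpose_block_index(1)[OF m, of a c] by blast
    show "mat N N (\<lambda>(r, c). embed_block N i m Y $$ (?t r, ?t c)) $$ (r, c) =
      embed_block N i m (mat m m (\<lambda>(r, c). Y $$ (?s r, ?s c))) $$ (r, c)"
    proof (cases "a \<le> r \<and> r < a + m \<and> a \<le> c \<and> c < a + m")
      case True
      then have "a \<le> ?t r \<and> ?t r < a + m \<and> a \<le> ?t c \<and> ?t c < a + m"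
        using in_block_iff by blast
      moreover have "r - a < m" "c - a < m" using True by auto
      ultimately show ?thesis
        using True r c t_lt[OF r] t_lt[OF c] s_lt
          transpose_block_index(2)[OF m, of a r] transpose_block_index(2)[OF m, of a c]
        by (simp add: index_embed_block i)
    next
      case False
      then have "\<not> (a \<le> ?t r \<and> ?t r < a + m \<and> a \<le> ?t c \<and> ?t c < a + m)"
        using in_block_iff by blast
      then show ?thesis
        using r c t_lt[OF r] t_lt[OF c]
        by (simp only: index_mat(1) split index_embed_block i diff_Suc_1 if_not_P[OF False] if_False)
    qed
  qed (simp_all add: embed_block_def)
qed

definition v_tilde :: "nat \<Rightarrow> complex mat" where
  "v_tilde m = plane_mat m 0 (m - 1) 1 1 1 (-1)"

definition v_tilde_inv :: "nat \<Rightarrow> complex mat" where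
  "v_tilde_inv m = plane_mat m 0 (m - 1) (1/2) (1/2) (1/2) (-1/2)"

lemma v_tilde_carrier [simp]: "v_tilde m \<in> carrier_mat m m"
  by (simp add: v_tilde_def)

lemma v_tilde_inv_carrier [simp]: "v_tilde_inv m \<in> carrier_mat m m"
  by (simp add: v_tilde_inv_def)

lemma v_tilde_inverse:
  assumes "2 \<le> m"
  shows "v_tilde m * v_tilde_inv m = 1\<^sub>m m" "v_tilde_inv m * v_tilde m = 1\<^sub>m m"
  using assms by (simp_all add: v_tilde_def v_tilde_inv_def plane_mat_mult plane_mat_id)

lemma c_mat_mult_v_tilde:
  assumes "2 \<le> m"
  shows "c_mat m * v_tilde m = v_tilde m * perm_mat m (Transposition.transpose 1 m)"
proof -
  have t: "Transposition.transpose 1 m ` {1..m} \<subseteq> {1..m}"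
    using assms by (auto simp: transpose_def)
  show ?thesis
    unfolding c_mat_eq_reflection_mat reflection_mat_mult[OF v_tilde_carrier] mult_perm_mat[OF t v_tilde_carrier]
    by (rule eq_matI) (use assms in \<open>auto simp: v_tilde_def plane_mat_def transpose_def\<close>)
qed

lemma theta'_embed_block:
  assumes ij: "1 \<le> i" "i < j" "j \<le> n + 1" and Y: "Y \<in> carrier_mat (j + 1 - i) (j + 1 - i)"
  shows "theta' n i j (embed_block (n + 1) i (j + 1 - i) Y) =
    embed_block (n + 1) i (j + 1 - i)
      (v_tilde_inv (j + 1 - i) * (c_mat (j + 1 - i) * (v_tilde (j + 1 - i) * Y * v_tilde_inv (j + 1 - i)) *
        c_mat (j + 1 - i)) * v_tilde (j + 1 - i))"
proof -
  let ?m = "j + 1 - i"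
  have m: "2 \<le> ?m" using ij by simp
  have "theta' n i j (embed_block (n + 1) i ?m Y) =
    perm_mat (n + 1) (Transposition.transpose i (i + ?m - 1)) * embed_block (n + 1) i ?m Y *
    perm_mat (n + 1) (Transposition.transpose i (i + ?m - 1))"
    using theta'_eq_conj_transpose[OF ij embed_block_carrier] ij by simp
  also have "\<dots> = embed_block (n + 1) i ?m (perm_mat ?m (Transposition.transpose 1 ?m) * Y * perm_mat ?m (Transposition.transpose 1 ?m))"
    using ij by (intro conj_transpose_embed_block Y) auto
  also have "perm_mat ?m (Transposition.transpose 1 ?m) * Y * perm_mat ?m (Transposition.transpose 1 ?m) =
    v_tilde_inv ?m * (c_mat ?m * (v_tilde ?m * Y * v_tilde_inv ?m) * c_mat ?m) * v_tilde ?m"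
    by (rule conj_intertwined[symmetric, OF v_tilde_carrier v_tilde_inv_carrier c_mat_carrier perm_mat_carrier Y
      v_tilde_inverse[OF m] c_mat_mult_v_tilde[OF m]])
  finally show ?thesis .
qed

section \<open>Openness of the orbit\<close>

definition entry_ball :: "nat \<Rightarrow> complex mat \<Rightarrow> real \<Rightarrow> complex mat set" where
  "entry_ball m A d = {B \<in> carrier_mat m m. \<forall>r<m. \<forall>c<m. cmod (B $$ (r, c) - A $$ (r, c)) < d}"

definition entry_nhds :: "nat \<Rightarrow> complex mat \<Rightarrow> complex mat filter" where
  "entry_nhds m A = (INF d\<in>{0<..}. principal (entry_ball m A d))"

lemma eventually_entry_nhds: "eventually P (entry_nhds m A) \<longleftrightarrow> (\<exists>d>0. \<forall>B \<in> entry_ball m A d. P B)"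
  unfolding entry_nhds_def
proof (subst eventually_INF_base)
  fix a b :: real assume "a \<in> {0<..}" "b \<in> {0<..}"
  then show "\<exists>d\<in>{0<..}. principal (entry_ball m A d) \<le> inf (principal (entry_ball m A a)) (principal (entry_ball m A b))"
    by (intro bexI[of _ "min a b"]) (auto simp: entry_ball_def)
qed (auto simp: eventually_principal)

lemma mat_open_iff_eventually:
  "mat_open m S \<longleftrightarrow> S \<subseteq> carrier_mat m m \<and> (\<forall>A \<in> S. eventually (\<lambda>B. B \<in> S) (entry_nhds m A))"
  unfolding mat_open_def eventually_entry_nhds entry_ball_def by blast

lemma tendsto_index_entry_nhds:
  assumes "r < m" "c < m"
  shows "((\<lambda>B. B $$ (r, c)) \<longlongrightarrow> A $$ (r, c)) (entry_nhds m A)"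
  unfolding tendsto_iff dist_norm eventually_entry_nhds
  using assms by (auto simp: entry_ball_def)

definition leading_submat :: "nat \<Rightarrow> 'a mat \<Rightarrow> 'a mat" where
  "leading_submat k A = mat k k (\<lambda>(r, c). A $$ (r, c))"

lemma leading_submat_carrier [simp]: "leading_submat k A \<in> carrier_mat k k"
  by (simp add: leading_submat_def)

lemma leading_submat_full: "A \<in> carrier_mat m m \<Longrightarrow> leading_submat m A = A"
  by (rule eq_matI) (auto simp: leading_submat_def)

lemma tendsto_det_leading_submat:
  assumes "k \<le> m"
  shows "((\<lambda>B. det (leading_submat k B)) \<longlongrightarrow> det (leading_submat k A)) (entry_nhds m A)"
proof -
  have det_eq: "det (leading_submat k B) = (\<Sum>p \<in> {p. p permutes {0..<k}}. signof p * (\<Prod>i = 0..<k. B $$ (i, p i)))"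
    for B :: "complex mat"
    unfolding det_def'[OF leading_submat_carrier]
    by (intro sum.cong refl arg_cong[where f = "\<lambda>x. _ * x"] prod.cong)
       (auto simp: leading_submat_def dest: permutes_in_image)
  show ?thesis
    unfolding det_eq
  proof (intro tendsto_sum tendsto_mult tendsto_const tendsto_prod tendsto_index_entry_nhds)
    fix p i assume p: "p \<in> {p. p permutes {0..<k}}" and i: "i \<in> {0..<k}"
    then have "p i \<in> {0..<k}" by (simp add: permutes_in_image)
    with i assms show "i < m" "p i < m" by auto
  qed
qed

text \<open>In terms of the columns g_1, ..., g_m: g_1 is not in the K-stable hyperplane C^(m-1), and
  g_1, ..., g_(m-1) span a hyperplane not containing e_m.\<close>

definition open_orbit_mat :: "nat \<Rightarrow> complex mat \<Rightarrow> bool" where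
  "open_orbit_mat m g \<longleftrightarrow> g \<in> carrier_mat m m \<and> det g \<noteq> 0 \<and>
     det (leading_submat (m - 1) g) \<noteq> 0 \<and> g $$ (m - 1, 0) \<noteq> 0"

lemma eventually_open_orbit_mat:
  assumes "open_orbit_mat m A" "0 < m"
  shows "eventually (open_orbit_mat m) (entry_nhds m A)"
proof -
  have A: "A \<in> carrier_mat m m" using assms by (simp add: open_orbit_mat_def)
  have "eventually (\<lambda>B. B \<in> carrier_mat m m) (entry_nhds m A)"
    unfolding eventually_entry_nhds entry_ball_def by (auto intro: exI[of _ 1])
  moreover have "eventually (\<lambda>B. det (leading_submat m B) \<noteq> 0) (entry_nhds m A)"
    by (rule tendsto_imp_eventually_ne[OF tendsto_det_leading_submat[OF le_refl]])
       (use assms A in \<open>simp add: open_orbit_mat_def leading_submat_full\<close>)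
  moreover have "eventually (\<lambda>B. det (leading_submat (m - 1) B) \<noteq> 0) (entry_nhds m A)"
    by (rule tendsto_imp_eventually_ne[OF tendsto_det_leading_submat])
       (use assms in \<open>auto simp: open_orbit_mat_def\<close>)
  moreover have "eventually (\<lambda>B. B $$ (m - 1, 0) \<noteq> 0) (entry_nhds m A)"
    by (rule tendsto_imp_eventually_ne[OF tendsto_index_entry_nhds])
       (use assms in \<open>auto simp: open_orbit_mat_def\<close>)
  ultimately show ?thesis
    by eventually_elim (auto simp: open_orbit_mat_def leading_submat_full)
qed

lemma mat_open_open_orbit_mat:
  assumes "0 < m"
  shows "mat_open m {g. open_orbit_mat m g}"
proof -
  have "eventually (\<lambda>B. B \<in> {g. open_orbit_mat m g}) (entry_nhds m A)" if "open_orbit_mat m A" for A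
    using eventually_open_orbit_mat[OF that assms] by simp
  then show ?thesis
    unfolding mat_open_iff_eventually by (auto simp: open_orbit_mat_def)
qed

section \<open>The double coset K v_tilde B\<close>

definition unit_col :: "nat \<Rightarrow> 'a :: zero_neq_one mat" where
  "unit_col p = mat p 1 (\<lambda>(r, _). if r = 0 then 1 else 0)"

definition unit_row :: "nat \<Rightarrow> 'a :: zero_neq_one mat" where
  "unit_row p = mat 1 p (\<lambda>(_, c). if c = 0 then 1 else 0)"

lemma unit_col_carrier: "unit_col p \<in> carrier_mat p 1"
  by (simp add: unit_col_def)

lemma unit_row_carrier: "unit_row p \<in> carrier_mat 1 p"
  by (simp add: unit_row_def)

\<comment> \<open>The simplifier rewrites the dimension 1 to Suc 0, so the carrier facts are declared in that form.\<close>
lemmas unit_col_row_carrier_simps [simp] = unit_col_carrier[simplified] unit_row_carrier[simplified]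

lemma dim_unit_col_row [simp]:
  "dim_row (unit_col p) = p" "dim_col (unit_col p) = 1" "dim_row (unit_row p) = 1" "dim_col (unit_row p) = p"
  by (simp_all add: unit_col_def unit_row_def)

lemma unit_row_mult:
  fixes B :: "'a :: semiring_1 mat"
  assumes B: "B \<in> carrier_mat p n" and "0 < p"
  shows "unit_row p * B = mat 1 n (\<lambda>(_, c). B $$ (0, c))"
proof (rule eq_matI)
  fix r c assume "r < dim_row (mat 1 n (\<lambda>(_, c). B $$ (0, c)))" "c < dim_col (mat 1 n (\<lambda>(_, c). B $$ (0, c)))"
  then have r: "r < 1" and c: "c < n" by auto
  have "(unit_row p * B) $$ (r, c) = unit_row p $$ (r, 0) * B $$ (0, c)"
    by (subst index_mult_mat_sum[OF unit_row_carrier B r c], rule sum_lessThan_single)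
       (use assms r in \<open>auto simp: unit_row_def\<close>)
  then show "(unit_row p * B) $$ (r, c) = mat 1 n (\<lambda>(_, c). B $$ (0, c)) $$ (r, c)"
    using assms r c by (simp add: unit_row_def)
qed (use B in auto)

lemma unit_col_mult:
  fixes C :: "'a :: semiring_1 mat"
  assumes C: "C \<in> carrier_mat 1 n"
  shows "unit_col p * C = mat p n (\<lambda>(r, c). if r = 0 then C $$ (0, c) else 0)"
  by (rule eq_matI) (use C in \<open>auto simp: unit_col_def scalar_prod_def\<close>)

lemma leading_submat_four_block_mat:
  "A \<in> carrier_mat p p \<Longrightarrow> leading_submat p (four_block_mat A B C D) = A"
  by (rule eq_matI) (auto simp: leading_submat_def)

lemma four_block_mat_split_last:
  assumes "A \<in> carrier_mat (p + 1) (p + 1)"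
  shows "A = four_block_mat (leading_submat p A) (mat p 1 (\<lambda>(r, _). A $$ (r, p)))
    (mat 1 p (\<lambda>(_, c). A $$ (p, c))) (mat 1 1 (\<lambda>_. A $$ (p, p)))"
  by (rule eq_matI) (use assms in \<open>auto simp: leading_submat_def less_Suc_eq\<close>)

lemma v_tilde_block:
  assumes "0 < p"
  shows "v_tilde (p + 1) = four_block_mat (1\<^sub>m p) (unit_col p) (unit_row p) (- 1\<^sub>m 1)"
  by (rule eq_matI) (use assms in \<open>auto simp: v_tilde_def plane_mat_def unit_col_def unit_row_def\<close>)

lemma det_v_tilde_ne_zero: "2 \<le> m \<Longrightarrow> det (v_tilde m) \<noteq> 0"
  by (rule det_ne_zero_if_right_inverse[OF v_tilde_carrier v_tilde_inv_carrier v_tilde_inverse(1)])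

lemma block_diag_mult_v_tilde_mult_upper:
  assumes K1: "K1 \<in> carrier_mat p p" and \<kappa>: "\<kappa> \<in> carrier_mat 1 1"
    and B1: "B1 \<in> carrier_mat p p" and \<beta>: "\<beta> \<in> carrier_mat p 1" and \<beta>': "\<beta>' \<in> carrier_mat 1 1"
    and "0 < p"
  shows "four_block_mat K1 (0\<^sub>m p 1) (0\<^sub>m 1 p) \<kappa> * v_tilde (p + 1) * four_block_mat B1 \<beta> (0\<^sub>m 1 p) \<beta>' =
    four_block_mat (K1 * B1) (K1 * \<beta> + K1 * unit_col p * \<beta>') (\<kappa> * unit_row p * B1)
      (\<kappa> * unit_row p * \<beta> - \<kappa> * \<beta>')"
proof -
  have "four_block_mat K1 (0\<^sub>m p 1) (0\<^sub>m 1 p) \<kappa> * v_tilde (p + 1) =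
    four_block_mat (K1 * 1\<^sub>m p + 0\<^sub>m p 1 * unit_row p) (K1 * unit_col p + 0\<^sub>m p 1 * - 1\<^sub>m 1)
      (0\<^sub>m 1 p * 1\<^sub>m p + \<kappa> * unit_row p) (0\<^sub>m 1 p * unit_col p + \<kappa> * - 1\<^sub>m 1)"
    unfolding v_tilde_block[OF \<open>0 < p\<close>]
    by (rule mult_four_block_mat[OF K1 zero_carrier_mat zero_carrier_mat \<kappa> one_carrier_mat
      unit_col_carrier unit_row_carrier uminus_carrier_mat[OF one_carrier_mat]])
  also have "\<dots> = four_block_mat K1 (K1 * unit_col p) (\<kappa> * unit_row p) (- \<kappa>)"
  proof -
    have "- 0\<^sub>m p 1 = (0\<^sub>m p 1 :: complex mat)" by (rule eq_matI) auto
    then show ?thesis using K1 \<kappa> by simp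
  qed
  finally have "four_block_mat K1 (0\<^sub>m p 1) (0\<^sub>m 1 p) \<kappa> * v_tilde (p + 1) * four_block_mat B1 \<beta> (0\<^sub>m 1 p) \<beta>' =
    four_block_mat (K1 * B1 + K1 * unit_col p * 0\<^sub>m 1 p) (K1 * \<beta> + K1 * unit_col p * \<beta>')
      (\<kappa> * unit_row p * B1 + - \<kappa> * 0\<^sub>m 1 p) (\<kappa> * unit_row p * \<beta> + - \<kappa> * \<beta>')"
    by (simp only:) (rule mult_four_block_mat[OF K1 mult_carrier_mat[OF K1 unit_col_carrier]
      mult_carrier_mat[OF \<kappa> unit_row_carrier] uminus_carrier_mat[OF \<kappa>] B1 \<beta> zero_carrier_mat \<beta>'])
  also have "\<dots> = four_block_mat (K1 * B1) (K1 * \<beta> + K1 * unit_col p * \<beta>') (\<kappa> * unit_row p * B1)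
      (\<kappa> * unit_row p * \<beta> - \<kappa> * \<beta>')"
  proof -
    have "\<kappa> * unit_row p * B1 \<in> carrier_mat 1 p" "\<kappa> * unit_row p * \<beta> \<in> carrier_mat 1 1"
      "\<kappa> * \<beta>' \<in> carrier_mat 1 1"
      using \<kappa> B1 \<beta> \<beta>' unit_row_carrier by (auto intro!: mult_carrier_mat)
    then show ?thesis
      using K1 \<kappa> B1 \<beta> \<beta>' by (simp add: add_uminus_minus_mat)
  qed
  finally show ?thesis .
qed

lemma upper_triangular_diag_ne_zero:
  fixes A :: "'a :: idom mat"
  assumes "A \<in> carrier_mat n n" "upper_triangular A" "det A \<noteq> 0" "i < n"
  shows "A $$ (i, i) \<noteq> 0"
  using assms det_upper_triangular[OF assms(2,1)] by (auto simp: prod_list_diag_prod)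

lemma K_grp_blockE:
  assumes k: "k \<in> K_grp (p + 1)"
  obtains K1 \<kappa> where "K1 \<in> carrier_mat p p" "\<kappa> \<in> carrier_mat 1 1"
    "k = four_block_mat K1 (0\<^sub>m p 1) (0\<^sub>m 1 p) \<kappa>" "det K1 \<noteq> 0" "\<kappa> $$ (0, 0) \<noteq> 0"
proof -
  let ?K1 = "leading_submat p k" and ?\<kappa> = "mat 1 1 (\<lambda>_. k $$ (p, p))"
  have carrier: "k \<in> carrier_mat (p + 1) (p + 1)" and "det k \<noteq> 0"
    using k by (auto simp: K_grp_def invertible_mat_iff_det_ne_zero)
  have "mat p 1 (\<lambda>(r, _). k $$ (r, p)) = 0\<^sub>m p 1" "mat 1 p (\<lambda>(_, c). k $$ (p, c)) = 0\<^sub>m 1 p"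
    using k by (auto simp: K_grp_def)
  then have k_eq: "k = four_block_mat ?K1 (0\<^sub>m p 1) (0\<^sub>m 1 p) ?\<kappa>"
    using four_block_mat_split_last[OF carrier] by simp
  have "det k = det ?K1 * det ?\<kappa>"
    by (subst k_eq, rule det_four_block_mat_lower_left_zero) auto
  then have "det ?K1 \<noteq> 0" "?\<kappa> $$ (0, 0) \<noteq> 0"
    using \<open>det k \<noteq> 0\<close> det_single[of ?\<kappa>] by auto
  with k_eq show ?thesis by (intro that) auto
qed

lemma borel_grp_blockE:
  assumes b: "b \<in> borel_grp (p + 1)" and "0 < p"
  obtains B1 \<beta> \<beta>' where "B1 \<in> carrier_mat p p" "\<beta> \<in> carrier_mat p 1" "\<beta>' \<in> carrier_mat 1 1"
    "b = four_block_mat B1 \<beta> (0\<^sub>m 1 p) \<beta>'" "det B1 \<noteq> 0" "B1 $$ (0, 0) \<noteq> 0"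
proof -
  let ?B1 = "leading_submat p b"
  have carrier: "b \<in> carrier_mat (p + 1) (p + 1)" and "det b \<noteq> 0"
    and ut: "upper_triangular b"
    using b by (auto simp: borel_grp_def invertible_mat_iff_det_ne_zero upper_triangular_def)
  have "mat 1 p (\<lambda>(_, c). b $$ (p, c)) = 0\<^sub>m 1 p"
    using b by (auto simp: borel_grp_def)
  then have b_eq: "b = four_block_mat ?B1 (mat p 1 (\<lambda>(r, _). b $$ (r, p))) (0\<^sub>m 1 p) (mat 1 1 (\<lambda>_. b $$ (p, p)))"
    using four_block_mat_split_last[OF carrier] by simp
  have "det b = det ?B1 * det (mat 1 1 (\<lambda>_. b $$ (p, p)))"
    by (subst b_eq, rule det_four_block_mat_lower_left_zero) auto
  then have "det ?B1 \<noteq> 0" using \<open>det b \<noteq> 0\<close> by auto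
  moreover have "?B1 $$ (0, 0) \<noteq> 0"
    using upper_triangular_diag_ne_zero[OF carrier ut \<open>det b \<noteq> 0\<close>, of 0] \<open>0 < p\<close>
    by (simp add: leading_submat_def)
  ultimately show ?thesis using b_eq by (intro that) auto
qed

lemma open_orbit_mat_K_v_tilde_borel:
  assumes p: "0 < p" and k: "k \<in> K_grp (p + 1)" and b: "b \<in> borel_grp (p + 1)"
  shows "open_orbit_mat (p + 1) (k * v_tilde (p + 1) * b)"
proof -
  obtain K1 \<kappa> where K1: "K1 \<in> carrier_mat p p" and \<kappa>: "\<kappa> \<in> carrier_mat 1 1"
    and k_eq: "k = four_block_mat K1 (0\<^sub>m p 1) (0\<^sub>m 1 p) \<kappa>" and "det K1 \<noteq> 0" "\<kappa> $$ (0, 0) \<noteq> 0"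
    using K_grp_blockE[OF k] .
  obtain B1 \<beta> \<beta>' where B1: "B1 \<in> carrier_mat p p" and \<beta>: "\<beta> \<in> carrier_mat p 1" and \<beta>': "\<beta>' \<in> carrier_mat 1 1"
    and b_eq: "b = four_block_mat B1 \<beta> (0\<^sub>m 1 p) \<beta>'" and "det B1 \<noteq> 0" "B1 $$ (0, 0) \<noteq> 0"
    using borel_grp_blockE[OF b p] .
  let ?g = "k * v_tilde (p + 1) * b"
  have g: "?g \<in> carrier_mat (p + 1) (p + 1)"
    using k b by (auto simp: K_grp_def borel_grp_def intro!: mult_carrier_mat)
  have g_eq: "?g = four_block_mat (K1 * B1) (K1 * \<beta> + K1 * unit_col p * \<beta>') (\<kappa> * unit_row p * B1)
      (\<kappa> * unit_row p * \<beta> - \<kappa> * \<beta>')"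
    unfolding k_eq b_eq by (rule block_diag_mult_v_tilde_mult_upper[OF K1 \<kappa> B1 \<beta> \<beta>' p])
  have "det ?g = det k * det (v_tilde (p + 1)) * det b"
    using k b by (auto simp: K_grp_def borel_grp_def det_mult[of _ "p + 1"] intro!: mult_carrier_mat)
  moreover have "det k \<noteq> 0" "det b \<noteq> 0"
    using k b by (auto simp: K_grp_def borel_grp_def invertible_mat_iff_det_ne_zero)
  ultimately have "det ?g \<noteq> 0" using det_v_tilde_ne_zero[of "p + 1"] p by auto
  moreover have "det (leading_submat p ?g) \<noteq> 0"
    unfolding g_eq using K1 B1 \<open>det K1 \<noteq> 0\<close> \<open>det B1 \<noteq> 0\<close>
    by (simp add: leading_submat_four_block_mat det_mult)
  moreover have "?g $$ (p, 0) = \<kappa> $$ (0, 0) * B1 $$ (0, 0)"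
    unfolding g_eq using K1 \<kappa> B1 p
    by (simp add: assoc_mult_mat[OF \<kappa> unit_row_carrier B1] unit_row_mult scalar_prod_def)
  ultimately show ?thesis
    using g \<open>\<kappa> $$ (0, 0) \<noteq> 0\<close> \<open>B1 $$ (0, 0) \<noteq> 0\<close> by (simp add: open_orbit_mat_def)
qed

definition first_row_mat :: "nat \<Rightarrow> 'a :: zero_neq_one mat \<Rightarrow> 'a mat" where
  "first_row_mat p r = mat p p (\<lambda>(a, b). if a = 0 then r $$ (0, b) else if a = b then 1 else 0)"

lemma first_row_mat:
  fixes r :: "'a :: idom mat"
  assumes r: "r \<in> carrier_mat 1 p" and "0 < p"
  shows "first_row_mat p r \<in> carrier_mat p p" "upper_triangular (first_row_mat p r)"
    "det (first_row_mat p r) = r $$ (0, 0)" "unit_row p * first_row_mat p r = r"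
proof -
  show D: "first_row_mat p r \<in> carrier_mat p p" and ut: "upper_triangular (first_row_mat p r)"
    by (auto simp: first_row_mat_def upper_triangular_def)
  have "det (first_row_mat p r) = (\<Prod>i = 0..<p. if i = 0 then r $$ (0, 0) else 1)"
    unfolding det_upper_triangular[OF ut D] prod_list_diag_prod
    by (intro prod.cong) (auto simp: first_row_mat_def)
  then show "det (first_row_mat p r) = r $$ (0, 0)"
    using \<open>0 < p\<close> by simp
  show "unit_row p * first_row_mat p r = r"
    unfolding unit_row_mult[OF D \<open>0 < p\<close>]
    by (rule eq_matI) (use r in \<open>auto simp: first_row_mat_def\<close>)
qed

lemma block_factorization:
  fixes P Q Di D q r s :: "complex mat"
  assumes P: "P \<in> carrier_mat p p" and Q: "Q \<in> carrier_mat p p" "P * Q = 1\<^sub>m p"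
    and D: "D \<in> carrier_mat p p" and Di: "Di \<in> carrier_mat p p" and DiD: "Di * D = 1\<^sub>m p"
    and r: "unit_row p * D = r"
    and q: "q \<in> carrier_mat p 1" and s: "s \<in> carrier_mat 1 1" and "0 < p"
  obtains \<beta> \<beta>' where "\<beta> \<in> carrier_mat p 1" "\<beta>' \<in> carrier_mat 1 1"
    "four_block_mat (P * Di) (0\<^sub>m p 1) (0\<^sub>m 1 p) (1\<^sub>m 1) * v_tilde (p + 1) * four_block_mat D \<beta> (0\<^sub>m 1 p) \<beta>' =
     four_block_mat P q r s"
proof -
  define x where "x = D * (Q * q)"
  define c where "c = (x $$ (0, 0) - s $$ (0, 0)) / 2"
  define \<beta> where "\<beta> = mat p 1 (\<lambda>(a, _). x $$ (a, 0) - (if a = 0 then c else 0))"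
  define \<beta>' where "\<beta>' = mat 1 1 (\<lambda>_. c)"
  have x: "x \<in> carrier_mat p 1" using D Q q by (simp add: x_def)
  have \<beta>: "\<beta> \<in> carrier_mat p 1" and \<beta>': "\<beta>' \<in> carrier_mat 1 1" by (simp_all add: \<beta>_def \<beta>'_def)
  have PDi: "P * Di \<in> carrier_mat p p" using P Di by simp
  have PDiD: "P * Di * D = P"
    using P D by (simp add: assoc_mult_mat[OF P Di D] DiD)
  moreover have "P * Di * \<beta> + P * Di * unit_col p * \<beta>' = q"
  proof -
    have "\<beta> + unit_col p * \<beta>' = x"
      unfolding unit_col_mult[OF \<beta>']
      by (rule eq_matI) (use x in \<open>auto simp: \<beta>_def \<beta>'_def\<close>)
    then have "P * Di * \<beta> + P * Di * unit_col p * \<beta>' = P * Di * x"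
      by (simp add: assoc_mult_mat[OF PDi unit_col_carrier \<beta>']
        mult_add_distrib_mat[OF PDi \<beta> mult_carrier_mat[OF unit_col_carrier \<beta>'], symmetric])
    also have "\<dots> = P * Di * D * (Q * q)"
      unfolding x_def using Q q by (simp add: assoc_mult_mat[OF PDi D, of _ 1])
    also have "\<dots> = q"
      using Q q by (simp add: PDiD assoc_mult_mat[OF P Q(1) q, symmetric])
    finally show ?thesis .
  qed
  moreover have "1\<^sub>m 1 * unit_row p * D = r"
    using D r by simp
  moreover have "unit_row p * \<beta> - \<beta>' = s"
    unfolding unit_row_mult[OF \<beta> \<open>0 < p\<close>]
    by (rule eq_matI) (use s \<open>0 < p\<close> in \<open>auto simp: \<beta>_def \<beta>'_def c_def field_simps\<close>)
  then have "1\<^sub>m 1 * unit_row p * \<beta> - 1\<^sub>m 1 * \<beta>' = s"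
    using \<beta> \<beta>' by simp
  ultimately show thesis
    using block_diag_mult_v_tilde_mult_upper[OF PDi one_carrier_mat D \<beta> \<beta>' \<open>0 < p\<close>]
    by (intro that[OF \<beta> \<beta>']) simp
qed

lemma block_diag_in_K_grp:
  assumes "K1 \<in> carrier_mat p p" "det K1 \<noteq> 0"
  shows "four_block_mat K1 (0\<^sub>m p 1) (0\<^sub>m 1 p) (1\<^sub>m 1) \<in> K_grp (p + 1)"
proof -
  have "det (four_block_mat K1 (0\<^sub>m p 1) (0\<^sub>m 1 p) (1\<^sub>m 1)) \<noteq> 0"
    using assms by (subst det_four_block_mat_lower_left_zero) auto
  moreover have "four_block_mat K1 (0\<^sub>m p 1) (0\<^sub>m 1 p) (1\<^sub>m 1) \<in> carrier_mat (p + 1) (p + 1)"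
    using assms(1) by (rule four_block_carrier_mat) simp
  ultimately show ?thesis
    using assms(1) by (auto simp: K_grp_def invertible_mat_iff_det_ne_zero)
qed

lemma upper_block_in_borel_grp:
  assumes D: "D \<in> carrier_mat p p" "upper_triangular D" and "\<beta>' \<in> carrier_mat 1 1"
    and det: "det (four_block_mat D \<beta> (0\<^sub>m 1 p) \<beta>') \<noteq> 0"
  shows "four_block_mat D \<beta> (0\<^sub>m 1 p) \<beta>' \<in> borel_grp (p + 1)"
proof -
  have carrier: "four_block_mat D \<beta> (0\<^sub>m 1 p) \<beta>' \<in> carrier_mat (p + 1) (p + 1)"
    using D(1) assms(3) by (rule four_block_carrier_mat)
  have "upper_triangular (four_block_mat D \<beta> (0\<^sub>m 1 p) \<beta>')"
    by (rule upper_triangular_four_block[OF D(1) assms(3) D(2)]) (use assms(3) in \<open>auto simp: upper_triangular_def\<close>)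
  with carrier det show ?thesis
    by (auto simp: borel_grp_def invertible_mat_iff_det_ne_zero upper_triangular_def)
qed

lemma K_v_tilde_borel_if_open_orbit_mat:
  assumes p: "0 < p" and g: "open_orbit_mat (p + 1) g"
  shows "\<exists>k b. k \<in> K_grp (p + 1) \<and> b \<in> borel_grp (p + 1) \<and> g = k * v_tilde (p + 1) * b"
proof -
  let ?P = "leading_submat p g" and ?r = "mat 1 p (\<lambda>(_, c). g $$ (p, c))"
  have g_carrier: "g \<in> carrier_mat (p + 1) (p + 1)" and "det g \<noteq> 0" and "det ?P \<noteq> 0"
    and "g $$ (p, 0) \<noteq> 0"
    using g by (auto simp: open_orbit_mat_def)
  obtain Q where Q: "Q \<in> carrier_mat p p" "?P * Q = 1\<^sub>m p"
    using inverse_if_det_ne_zero[OF leading_submat_carrier \<open>det ?P \<noteq> 0\<close>] by metis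
  define D where "D = first_row_mat p ?r"
  have D: "D \<in> carrier_mat p p" "upper_triangular D" "det D = g $$ (p, 0)" "unit_row p * D = ?r"
    using first_row_mat[of ?r p] p by (simp_all add: D_def)
  obtain Di where Di: "Di \<in> carrier_mat p p" "Di * D = 1\<^sub>m p"
    using inverse_if_det_ne_zero[OF D(1)] D(3) \<open>g $$ (p, 0) \<noteq> 0\<close> by metis
  obtain \<beta> \<beta>' where "\<beta> \<in> carrier_mat p 1" and \<beta>': "\<beta>' \<in> carrier_mat 1 1"
    and factorization: "four_block_mat (?P * Di) (0\<^sub>m p 1) (0\<^sub>m 1 p) (1\<^sub>m 1) * v_tilde (p + 1) *
      four_block_mat D \<beta> (0\<^sub>m 1 p) \<beta>' = four_block_mat ?P (mat p 1 (\<lambda>(r, _). g $$ (r, p))) ?r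
        (mat 1 1 (\<lambda>_. g $$ (p, p)))"
    by (rule block_factorization[OF leading_submat_carrier Q D(1) Di D(4) mat_carrier mat_carrier p])
  let ?k = "four_block_mat (?P * Di) (0\<^sub>m p 1) (0\<^sub>m 1 p) (1\<^sub>m 1)" and ?b = "four_block_mat D \<beta> (0\<^sub>m 1 p) \<beta>'"
  have g_eq: "g = ?k * v_tilde (p + 1) * ?b"
    by (subst four_block_mat_split_last[OF g_carrier]) (rule factorization[symmetric])
  have "det (?P * Di) \<noteq> 0"
    using \<open>det ?P \<noteq> 0\<close> det_ne_zero_if_right_inverse[OF Di(1) D(1) Di(2)]
    by (simp add: det_mult[OF leading_submat_carrier Di(1)])
  then have k: "?k \<in> K_grp (p + 1)"
    by (rule block_diag_in_K_grp[OF mult_carrier_mat[OF leading_submat_carrier Di(1)]])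
  then have k_carrier: "?k \<in> carrier_mat (p + 1) (p + 1)" by (simp add: K_grp_def)
  have b_carrier: "?b \<in> carrier_mat (p + 1) (p + 1)" by (rule four_block_carrier_mat[OF D(1) \<beta>'])
  have "det g = det ?k * det (v_tilde (p + 1)) * det ?b"
    by (simp only: arg_cong[OF g_eq, of det] det_mult[OF k_carrier v_tilde_carrier]
      det_mult[OF mult_carrier_mat[OF k_carrier v_tilde_carrier] b_carrier])
  then have "?b \<in> borel_grp (p + 1)"
    using \<open>det g \<noteq> 0\<close> by (intro upper_block_in_borel_grp D(1,2) \<beta>') auto
  with k g_eq show ?thesis by blast
qed

lemma in_open_K_orbit_v_tilde:
  assumes "2 \<le> m"
  shows "in_open_K_orbit m (v_tilde m)"
proof -
  obtain p where m: "m = p + 1" and p: "0 < p"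
    using assms by (intro that[of "m - 1"]) auto
  have "{k * v_tilde m * b | k b. k \<in> K_grp m \<and> b \<in> borel_grp m} = {g. open_orbit_mat m g}"
    using open_orbit_mat_K_v_tilde_borel[OF p] K_v_tilde_borel_if_open_orbit_mat[OF p] unfolding m by blast
  then show ?thesis
    unfolding in_open_K_orbit_def using mat_open_open_orbit_mat[of m] m by simp
qed

theorem lemma3p5:
  fixes n i j :: nat
  assumes "1 \<le> i" and "i < j" and "j \<le> n + 1"
  shows "\<exists>vt vti. vt \<in> carrier_mat (j + 1 - i) (j + 1 - i) \<and>
                  vti \<in> carrier_mat (j + 1 - i) (j + 1 - i) \<and>
                  vt * vti = 1\<^sub>m (j + 1 - i) \<and> vti * vt = 1\<^sub>m (j + 1 - i) \<and>
                  (\<forall>Y \<in> carrier_mat (j + 1 - i) (j + 1 - i).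
                     theta' n i j (embed_block (n + 1) i (j + 1 - i) Y) =
                     embed_block (n + 1) i (j + 1 - i)
                       (vti * (c_mat (j + 1 - i) * (vt * Y * vti) * c_mat (j + 1 - i)) * vt)) \<and>
                  in_open_K_orbit (j + 1 - i) vt"
proof -
  have m: "2 \<le> j + 1 - i" using assms by simp
  show ?thesis
    by (intro exI[of _ "v_tilde (j + 1 - i)"] exI[of _ "v_tilde_inv (j + 1 - i)"] conjI ballI
        v_tilde_carrier v_tilde_inv_carrier v_tilde_inverse[OF m] theta'_embed_block[OF assms]
        in_open_K_orbit_v_tilde[OF m])
qed

end
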